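(* Let $\varphi,\psi\in G$ satisfy $\lim_{t\to 0+}\psi(t)/\varphi(t)=0$, and let $F$ be a symmetric space on $[0,1]$ whose fundamental function is $\psi$. Then $\Lambda(\varphi)\subset F$ and the identity inclusion operator $I:\Lambda(\varphi)\to F$ is disjointly strictly singular.
   Context: All functions are Lebesgue measurable on $[0,1]$, $\mu$ is Lebesgue measure, and $x^*$ denotes the decreasing left-continuous rearrangement of $|x|$. A symmetric space (SS) on $[0,1]$ is a Banach space $E$ of measurable functions on $[0,1]$ such that: (1) if $y\in E$ and $|x(t)|\le |y(t)|$ then $x\in E$ and $\|x\|\le\|y\|$; (2) if $y\in E$ and $x,y$ are equimeasurable (i.e. $\mu\{|x|>\tau\}=\mu\{|y|>\tau\}$ for all $\tau>0$) then $x\in E$ and $\|x\|=\|y\|$. The fundamental function of $E$ is $f_E(t)=\|\chi_{(0,t)}\|_E$. $G$ denotes the class of all positive increasing concave functions on $(0,1]$. For $\varphi\in G$, the Lorentz space $\Lambda(\varphi)$ consists of all measurable $x$ with $\|x\|_{\Lambda(\varphi)}=\int_0^1 x^*(s)\,d\varphi(s)<\infty$. A bounded linear operator $T$ from a Banach lattice $X$ into a Banach space $Y$ is disjointly strictly singular (DSS) if there is no sequence of nonzero pairwise disjoint elements $x_n\in X$ such that the restriction of $T$ to their closed linear span $[x_n]$ is an isomorphism (onto its image). *)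

theory Defs
  imports "HOL-Analysis.Analysis"
begin

definition meas01 :: "(real \<Rightarrow> real) \<Rightarrow> bool" where
  "meas01 x \<longleftrightarrow> x \<in> borel_measurable (lebesgue_on {0..1})"

definition distr01 :: "(real \<Rightarrow> real) \<Rightarrow> ennreal \<Rightarrow> ennreal" where
  "distr01 x \<tau> = emeasure lebesgue {t \<in> {0..1}. ennreal \<bar>x t\<bar> > \<tau>}"

text \<open>Decreasing left-continuous rearrangement of |x| (values in [0,\<infinity>]);
  at t = 0 it is the essential supremum (the limit x*(0+)).\<close>
definition rearr :: "(real \<Rightarrow> real) \<Rightarrow> real \<Rightarrow> ennreal" where
  "rearr x t = (if t \<le> 0 then Inf {\<tau>. distr01 x \<tau> = 0}
                else Inf {\<tau>. distr01 x \<tau> < ennreal t})"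

definition equimeasurable :: "(real \<Rightarrow> real) \<Rightarrow> (real \<Rightarrow> real) \<Rightarrow> bool" where
  "equimeasurable x y \<longleftrightarrow>
     (\<forall>\<tau>::real. \<tau> > 0 \<longrightarrow>
        emeasure lebesgue {t \<in> {0..1}. \<bar>x t\<bar> > \<tau>} = emeasure lebesgue {t \<in> {0..1}. \<bar>y t\<bar> > \<tau>})"

definition classG :: "(real \<Rightarrow> real) \<Rightarrow> bool" where
  "classG \<phi> \<longleftrightarrow> (\<forall>t\<in>{0<..1}. \<phi> t > 0) \<and> mono_on {0<..1} \<phi> \<and> concave_on {0<..1} \<phi>"

text \<open>Extension of \<phi> to a nondecreasing right-continuous function on the reals,
  with the convention \<phi>(0) = 0: the Stieltjes measure d\<phi> on [0,1] then carries
  the atom \<phi>(0+) at 0 (standard Krein-Petunin-Semenov convention).\<close>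
definition phi_ext :: "(real \<Rightarrow> real) \<Rightarrow> real \<Rightarrow> real" where
  "phi_ext \<phi> t = (if t < 0 then 0
                  else if t = 0 then Inf (\<phi> ` {0<..1})
                  else if t \<le> 1 then \<phi> t else \<phi> 1)"

definition lorentz_norm :: "(real \<Rightarrow> real) \<Rightarrow> (real \<Rightarrow> real) \<Rightarrow> ennreal" where
  "lorentz_norm \<phi> x = (\<integral>\<^sup>+ s. rearr x s * indicator {0..1} s \<partial>interval_measure (phi_ext \<phi>))"

definition lorentz_space :: "(real \<Rightarrow> real) \<Rightarrow> (real \<Rightarrow> real) set" where
  "lorentz_space \<phi> = {x. meas01 x \<and> lorentz_norm \<phi> x < \<infinity>}"

text \<open>Symmetric space (E, N) on [0,1]: a Banach space of (classes of a.e. equal)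
  measurable functions, with the ideal property and rearrangement invariance.\<close>
definition symmetric_space :: "(real \<Rightarrow> real) set \<Rightarrow> ((real \<Rightarrow> real) \<Rightarrow> real) \<Rightarrow> bool" where
  "symmetric_space E N \<longleftrightarrow>
     (\<forall>x\<in>E. meas01 x) \<and>
     (\<lambda>t. 0) \<in> E \<and>
     (\<forall>x\<in>E. \<forall>y\<in>E. (\<lambda>t. x t + y t) \<in> E) \<and>
     (\<forall>x\<in>E. \<forall>c. (\<lambda>t. c * x t) \<in> E) \<and>
     (\<forall>x\<in>E. \<forall>y\<in>E. N (\<lambda>t. x t + y t) \<le> N x + N y) \<and>
     (\<forall>x\<in>E. \<forall>c. N (\<lambda>t. c * x t) = \<bar>c\<bar> * N x) \<and>
     (\<forall>x\<in>E. N x \<ge> 0) \<and>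
     (\<forall>x\<in>E. N x = 0 \<longleftrightarrow> (AE t in lebesgue_on {0..1}. x t = 0)) \<and>
     (\<forall>xs. (\<forall>n. xs n \<in> E) \<and>
           (\<forall>e>0. \<exists>M. \<forall>m\<ge>M. \<forall>n\<ge>M. N (\<lambda>t. xs m t - xs n t) < e)
           \<longrightarrow> (\<exists>x\<in>E. (\<lambda>n. N (\<lambda>t. xs n t - x t)) \<longlonglongrightarrow> 0)) \<and>
     (\<forall>x y. y \<in> E \<and> meas01 x \<and> (\<forall>t\<in>{0..1}. \<bar>x t\<bar> \<le> \<bar>y t\<bar>) \<longrightarrow> x \<in> E \<and> N x \<le> N y) \<and>
     (\<forall>x y. y \<in> E \<and> meas01 x \<and> equimeasurable x y \<longrightarrow> x \<in> E \<and> N x = N y)"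

definition has_fundamental_function ::
    "(real \<Rightarrow> real) set \<Rightarrow> ((real \<Rightarrow> real) \<Rightarrow> real) \<Rightarrow> (real \<Rightarrow> real) \<Rightarrow> bool" where
  "has_fundamental_function E N \<psi> \<longleftrightarrow>
     (\<forall>t\<in>{0<..1}. indicator {0<..<t} \<in> E \<and> N (indicator {0<..<t}) = \<psi> t)"

definition lorentz_closed_span :: "(real \<Rightarrow> real) \<Rightarrow> (nat \<Rightarrow> real \<Rightarrow> real) \<Rightarrow> (real \<Rightarrow> real) set" where
  "lorentz_closed_span \<phi> xs =
     {z \<in> lorentz_space \<phi>. \<forall>e>0. \<exists>n c. lorentz_norm \<phi> (\<lambda>t. z t - (\<Sum>i<n. c i * xs i t)) < ennreal e}"

definition inclusion_DSS :: "(real \<Rightarrow> real) \<Rightarrow> (real \<Rightarrow> real) set \<Rightarrow> ((real \<Rightarrow> real) \<Rightarrow> real) \<Rightarrow> bool" where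
  "inclusion_DSS \<phi> E N \<longleftrightarrow>
     (\<exists>C. \<forall>x\<in>lorentz_space \<phi>. ennreal (N x) \<le> ennreal C * lorentz_norm \<phi> x) \<and>
     \<not> (\<exists>xs. (\<forall>n. xs n \<in> lorentz_space \<phi>) \<and>
            (\<forall>n. \<not> (AE t in lebesgue_on {0..1}. xs n t = 0)) \<and>
            (\<forall>m n. m \<noteq> n \<longrightarrow> (AE t in lebesgue_on {0..1}. xs m t * xs n t = 0)) \<and>
            (\<exists>c>0. \<forall>z\<in>lorentz_closed_span \<phi> xs. ennreal c * lorentz_norm \<phi> z \<le> ennreal (N z)))"

end

theory Submission
  imports Defs
begin

text \<open>Write \<open>\<mu>\<^sub>x(\<tau>) = level_measure x \<tau>\<close> for the measure of \<open>{|x| > \<tau>}\<close>. Slicing a bounded \<open>|x|\<close> into layers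
  of height \<open>h\<close> gives \<open>N x \<le> \<Sum>\<^sub>k h \<psi>(\<mu>\<^sub>x(k h))\<close>, while the rearrangement is at least
  \<open>k h\<close> on \<open>[0, \<mu>\<^sub>x(k h)]\<close>, so the Lorentz norm dominates \<open>\<Sum>\<^sub>k h \<phi>(\<mu>\<^sub>x(k h))\<close>.
  Hence, if \<open>\<psi> \<le> D \<phi>\<close> on the values of \<open>\<mu>\<^sub>x\<close>, the truncations \<open>min |x| n\<close> have norm at
  most \<open>D \<parallel>x\<parallel>\<close> and form a Cauchy sequence in \<open>F\<close>, their differences being controlled by
  tails of the convergent series \<open>\<Sum>\<^sub>j \<phi>(\<mu>\<^sub>x(j))\<close>. Their limit in \<open>F\<close> is also a limit in
  measure, hence equals \<open>|x|\<close> almost everywhere, and rearrangement invariance gives \<open>x \<in> F\<close>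
  with \<open>N x \<le> D \<parallel>x\<parallel>\<close>. Boundedness of \<open>\<psi> / \<phi>\<close> yields the embedding. Since \<open>\<psi> / \<phi> \<rightarrow> 0\<close>,
  \<open>D\<close> can be taken arbitrarily small for functions of small support, and a disjoint sequence
  contains elements of arbitrarily small support, so the inclusion is bounded below on the
  span of no disjoint sequence.\<close>

section \<open>Level sets of measurable functions on [0,1]\<close>

lemma meas01_Collect:
  assumes "meas01 x" "Measurable.pred borel P"
  shows "{t\<in>{0..1}. P (x t)} \<in> sets lebesgue"
proof -
  have [measurable]: "x \<in> borel_measurable (lebesgue_on {0..1})" "Measurable.pred borel P"
    using assms by (simp_all add: meas01_def)
  have "{t\<in>space (lebesgue_on {0..1}). P (x t)} \<in> sets (lebesgue_on {0..1})"
    by measurable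
  then show ?thesis by (simp add: sets_restrict_space_iff)
qed

lemma meas01_compose:
  assumes "meas01 x" "g \<in> borel_measurable borel"
  shows "meas01 (\<lambda>t. g (x t))"
  using assms unfolding meas01_def by measurable

lemma meas01_diff: "meas01 x \<Longrightarrow> meas01 y \<Longrightarrow> meas01 (\<lambda>t. x t - y t)"
  unfolding meas01_def by measurable

lemma meas01_add: "meas01 x \<Longrightarrow> meas01 y \<Longrightarrow> meas01 (\<lambda>t. x t + y t)"
  unfolding meas01_def by measurable

lemma meas01_scaled_indicator:
  assumes "E \<in> sets lebesgue"
  shows "meas01 (\<lambda>t. c * indicator E t)"
proof -
  have "(\<lambda>t. c * indicator E t) \<in> borel_measurable lebesgue"
    using assms by measurable
  then show ?thesis unfolding meas01_def by (rule measurable_restrict_space1)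
qed

lemma fmeasurable_subset01: "A \<subseteq> {0..1::real} \<Longrightarrow> A \<in> sets lebesgue \<Longrightarrow> A \<in> fmeasurable lebesgue"
  by (rule fmeasurableI2[of "{0..1}"]) auto

lemma measure_subset01_le_1: "A \<subseteq> {0..1::real} \<Longrightarrow> A \<in> sets lebesgue \<Longrightarrow> measure lebesgue A \<le> 1"
  using measure_mono_fmeasurable[of A "{0..1}" lebesgue] by auto

definition level_measure :: "(real \<Rightarrow> real) \<Rightarrow> real \<Rightarrow> real" where
  "level_measure x \<tau> = measure lebesgue {t\<in>{0..1}. \<tau> < \<bar>x t\<bar>}"

lemma sets_level_set: "meas01 x \<Longrightarrow> {t\<in>{0..1}. \<tau> < \<bar>x t\<bar>} \<in> sets lebesgue"
  by (rule meas01_Collect) auto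

lemma sets_support: "meas01 x \<Longrightarrow> {t\<in>{0..1}. x t \<noteq> 0} \<in> sets lebesgue"
  by (rule meas01_Collect) auto

lemma emeasure_level_set:
  "meas01 x \<Longrightarrow> emeasure lebesgue {t\<in>{0..1}. \<tau> < \<bar>x t\<bar>} = ennreal (level_measure x \<tau>)"
  unfolding level_measure_def
  by (intro emeasure_eq_measure2 fmeasurable_subset01 sets_level_set) auto

lemma level_measure_nonneg: "0 \<le> level_measure x \<tau>"
  by (simp add: level_measure_def)

lemma level_measure_le_1: "meas01 x \<Longrightarrow> level_measure x \<tau> \<le> 1"
  unfolding level_measure_def by (intro measure_subset01_le_1 sets_level_set) auto

lemma level_measure_le_measure:
  assumes "meas01 x" "B \<in> sets lebesgue" "B \<subseteq> {0..1}"
    and "\<And>t. t \<in> {0..1} \<Longrightarrow> \<tau> < \<bar>x t\<bar> \<Longrightarrow> t \<in> B"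
  shows "level_measure x \<tau> \<le> measure lebesgue B"
  unfolding level_measure_def
  using assms sets_level_set[OF assms(1)] by (intro measure_mono_fmeasurable fmeasurable_subset01) auto

lemma level_measure_mono:
  assumes "meas01 x" "meas01 y" "\<And>t. t \<in> {0..1} \<Longrightarrow> \<sigma> < \<bar>x t\<bar> \<Longrightarrow> \<tau> < \<bar>y t\<bar>"
  shows "level_measure x \<sigma> \<le> level_measure y \<tau>"
proof -
  have "level_measure x \<sigma> \<le> measure lebesgue {t\<in>{0..1}. \<tau> < \<bar>y t\<bar>}"
    by (rule level_measure_le_measure[OF assms(1) sets_level_set[OF assms(2)]]) (use assms(3) in auto)
  then show ?thesis by (simp add: level_measure_def)
qed

lemma level_measure_add_le:
  assumes u: "meas01 u" and v: "meas01 v"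
  shows "level_measure (\<lambda>t. u t + v t) (\<sigma> + \<tau>) \<le> level_measure u \<sigma> + level_measure v \<tau>"
proof -
  let ?U = "{t\<in>{0..1}. \<sigma> < \<bar>u t\<bar>}" and ?V = "{t\<in>{0..1}. \<tau> < \<bar>v t\<bar>}"
  have "\<sigma> < \<bar>u t\<bar> \<or> \<tau> < \<bar>v t\<bar>" if "\<sigma> + \<tau> < \<bar>u t + v t\<bar>" for t
    using that abs_triangle_ineq[of "u t" "v t"] by linarith
  then have "level_measure (\<lambda>t. u t + v t) (\<sigma> + \<tau>) \<le> measure lebesgue (?U \<union> ?V)"
    using sets_level_set[OF u] sets_level_set[OF v]
    by (intro level_measure_le_measure meas01_add u v) auto
  also have "\<dots> \<le> level_measure u \<sigma> + level_measure v \<tau>"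
    unfolding level_measure_def using sets_level_set[OF u] sets_level_set[OF v] by (rule measure_Un_le)
  finally show ?thesis .
qed

lemma level_measure_tendsto_0:
  assumes x: "meas01 x"
  shows "(\<lambda>n. level_measure x (real n)) \<longlonglongrightarrow> 0"
proof -
  define A where "A n = {t\<in>{0..1}. real n < \<bar>x t\<bar>}" for n
  have "(\<lambda>n. measure lebesgue (A n)) \<longlonglongrightarrow> measure lebesgue (\<Inter> (range A))"
  proof (rule Lim_measure_decseq)
    show "range A \<subseteq> sets lebesgue" using sets_level_set[OF x] by (auto simp: A_def)
    show "decseq A" unfolding decseq_def A_def by auto
    show "emeasure lebesgue (A n) \<noteq> \<infinity>" for n
    proof -
      have "A n \<in> fmeasurable lebesgue"
        unfolding A_def by (intro fmeasurable_subset01 sets_level_set x) auto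
      then show ?thesis by (auto simp: fmeasurable_def)
    qed
  qed
  moreover have "\<Inter> (range A) = {}"
  proof -
    have "\<exists>n. t \<notin> A n" for t
    proof -
      obtain n where "\<bar>x t\<bar> < real n" using reals_Archimedean2 by blast
      then show ?thesis by (intro exI[of _ n]) (simp add: A_def)
    qed
    then show ?thesis by blast
  qed
  ultimately show ?thesis by (simp add: A_def level_measure_def)
qed

lemma AE_zero_if_level_measures_zero:
  assumes x: "meas01 x" and zero: "\<And>\<eta>. 0 < \<eta> \<Longrightarrow> level_measure x \<eta> = 0"
  shows "AE t in lebesgue_on {0..1}. x t = 0"
proof -
  let ?A = "\<lambda>k::nat. {t\<in>{0..1}. inverse (real (Suc k)) < \<bar>x t\<bar>}"
  have "?A k \<in> null_sets lebesgue" for k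
    using emeasure_level_set[OF x] zero sets_level_set[OF x] by (intro null_setsI) auto
  then have "AE t in lebesgue. t \<notin> (\<Union>k. ?A k)"
    by (intro AE_not_in null_sets_UN)
  then have "AE t in lebesgue. t \<in> {0..1} \<longrightarrow> x t = 0"
  proof eventually_elim
    case (elim t)
    show ?case
    proof
      assume t: "t \<in> {0..1}"
      show "x t = 0"
      proof (rule ccontr)
        assume "x t \<noteq> 0"
        then have "0 < \<bar>x t\<bar>" by simp
        then obtain k where "inverse (real (Suc k)) < \<bar>x t\<bar>" using reals_Archimedean by blast
        then show False using elim t by auto
      qed
    qed
  qed
  then show ?thesis by (simp add: AE_restrict_space_iff)
qed

lemma equimeasurable_if_AE_abs_eq:
  assumes x: "meas01 x" and y: "meas01 y" and eq: "AE t in lebesgue_on {0..1}. \<bar>x t\<bar> = \<bar>y t\<bar>"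
  shows "equimeasurable x y"
  unfolding equimeasurable_def
proof (intro allI impI)
  fix \<tau> :: real
  have "AE t in lebesgue. t \<in> {0..1} \<longrightarrow> \<bar>x t\<bar> = \<bar>y t\<bar>"
    using eq by (simp add: AE_restrict_space_iff)
  then have "AE t in lebesgue. (t \<in> {t\<in>{0..1}. \<tau> < \<bar>x t\<bar>}) = (t \<in> {t\<in>{0..1}. \<tau> < \<bar>y t\<bar>})"
    by eventually_elim auto
  then show "emeasure lebesgue {t\<in>{0..1}. \<tau> < \<bar>x t\<bar>} = emeasure lebesgue {t\<in>{0..1}. \<tau> < \<bar>y t\<bar>}"
    by (intro emeasure_eq_AE sets_level_set x y)
qed

definition truncation :: "nat \<Rightarrow> (real \<Rightarrow> real) \<Rightarrow> real \<Rightarrow> real" where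
  "truncation n x = (\<lambda>t. min \<bar>x t\<bar> (real n))"

lemma meas01_truncation: "meas01 x \<Longrightarrow> meas01 (truncation n x)"
  unfolding truncation_def by (rule meas01_compose[of x "\<lambda>u. min \<bar>u\<bar> (real n)"]) auto

section \<open>The class G\<close>

lemma classG_pos: "classG \<phi> \<Longrightarrow> 0 < t \<Longrightarrow> t \<le> 1 \<Longrightarrow> 0 < \<phi> t"
  by (simp add: classG_def)

lemma classG_mono: "classG \<phi> \<Longrightarrow> 0 < s \<Longrightarrow> s \<le> t \<Longrightarrow> t \<le> 1 \<Longrightarrow> \<phi> s \<le> \<phi> t"
  unfolding classG_def mono_on_def by auto

lemma classG_continuous_on:
  assumes "classG \<phi>"
  shows "continuous_on {0<..<1} \<phi>"
proof -
  have "convex_on {0<..<1} (\<lambda>x. - \<phi> x)"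
    using assms unfolding classG_def concave_on_def by (rule conjE) (auto intro: convex_on_subset)
  then have "continuous_on {0<..<1} (\<lambda>x. - (- \<phi> x))"
    by (intro continuous_on_minus convex_on_continuous) auto
  then show ?thesis by simp
qed

text \<open>Functions of class G are positive on (0,1], while the norm of the indicator of a null set
  is 0: \<open>ext0 \<psi>\<close> is the fundamental function including its value 0 at 0.\<close>
definition ext0 :: "(real \<Rightarrow> real) \<Rightarrow> real \<Rightarrow> real" where
  "ext0 \<phi> a = (if a \<le> 0 then 0 else \<phi> a)"

lemma ext0_nonneg: "classG \<phi> \<Longrightarrow> a \<le> 1 \<Longrightarrow> 0 \<le> ext0 \<phi> a"
  unfolding ext0_def using classG_pos[of \<phi> a] by auto

lemma ext0_mono: "classG \<phi> \<Longrightarrow> a \<le> b \<Longrightarrow> b \<le> 1 \<Longrightarrow> ext0 \<phi> a \<le> ext0 \<phi> b"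
  unfolding ext0_def using classG_pos[of \<phi> b] classG_mono[of \<phi> a b] by auto

lemma ext0_le: "classG \<phi> \<Longrightarrow> a \<le> 1 \<Longrightarrow> ext0 \<phi> a \<le> \<phi> 1"
  using ext0_mono[of \<phi> a 1] by (simp add: ext0_def)

lemma isCont_ext0_0:
  assumes "(\<psi> \<longlongrightarrow> 0) (at_right 0)"
  shows "isCont (ext0 \<psi>) 0"
proof -
  have "\<forall>\<^sub>F a in at_left 0. a \<in> {-1<..<0::real}"
    by (rule eventually_at_left_real) simp
  then have "\<forall>\<^sub>F a in at_left 0. ext0 \<psi> a = 0"
    by eventually_elim (simp add: ext0_def)
  then have "(ext0 \<psi> \<longlongrightarrow> 0) (at_left 0)"
    by (rule tendsto_eventually)
  moreover have "\<forall>\<^sub>F a in at_right 0. \<psi> a = ext0 \<psi> a"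
    by (rule eventually_mono[OF eventually_at_right_less]) (simp add: ext0_def)
  then have "(ext0 \<psi> \<longlongrightarrow> 0) (at_right 0)"
    using assms tendsto_cong by blast
  moreover have "ext0 \<psi> 0 = 0"
    by (simp add: ext0_def)
  ultimately show ?thesis
    by (simp add: isCont_def filterlim_split_at)
qed

lemma tendsto_0_if_ext0_tendsto_0:
  assumes G: "classG \<psi>" and lim: "(\<lambda>n. ext0 \<psi> (b n)) \<longlonglongrightarrow> 0"
    and b: "\<And>n. 0 \<le> b n" "\<And>n. b n \<le> 1"
  shows "b \<longlonglongrightarrow> 0"
proof (rule order_tendstoI)
  fix y :: real assume "y < 0"
  then show "\<forall>\<^sub>F n in sequentially. y < b n"
    using b(1) by (intro always_eventually) (metis less_le_trans)
next
  fix e :: real assume "0 < e"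
  define a where "a = min e 1"
  have a: "0 < a" "a \<le> 1" "a \<le> e" using \<open>0 < e\<close> by (auto simp: a_def)
  have "\<forall>\<^sub>F n in sequentially. ext0 \<psi> (b n) < \<psi> a"
    using order_tendstoD(2)[OF lim] classG_pos[OF G a(1,2)] by blast
  then show "\<forall>\<^sub>F n in sequentially. b n < e"
  proof eventually_elim
    case (elim n)
    have "\<psi> a \<le> ext0 \<psi> (b n)" if "a \<le> b n"
      using that classG_mono[OF G a(1) _ b(2)] a by (simp add: ext0_def)
    then show ?case using elim a by force
  qed
qed

lemma ratio_eventually_le:
  assumes "classG \<phi>" and lim: "((\<lambda>t. \<psi> t / \<phi> t) \<longlongrightarrow> 0) (at_right 0)" and "0 < c"
  shows "\<exists>\<delta>>0. \<delta> \<le> 1 \<and> (\<forall>a. 0 < a \<longrightarrow> a < \<delta> \<longrightarrow> \<psi> a \<le> c * \<phi> a)"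
proof -
  obtain b where b: "0 < b" "\<And>t. 0 < t \<Longrightarrow> t < b \<Longrightarrow> dist (\<psi> t / \<phi> t) 0 < c"
    using tendstoD[OF lim \<open>0 < c\<close>] unfolding eventually_at_right[OF zero_less_one] by auto
  have "\<psi> a \<le> c * \<phi> a" if "0 < a" "a < min b 1" for a
  proof -
    have "0 < \<phi> a" using classG_pos[OF assms(1)] that by auto
    moreover have "\<bar>\<psi> a / \<phi> a\<bar> < c" using b(2)[of a] that by (simp add: dist_real_def)
    ultimately show ?thesis by (simp add: abs_less_iff pos_divide_less_eq less_imp_le)
  qed
  then show ?thesis using b by (intro exI[of _ "min b 1"]) auto
qed

lemma ratio_bounded:
  assumes G\<phi>: "classG \<phi>" and G\<psi>: "classG \<psi>" and lim: "((\<lambda>t. \<psi> t / \<phi> t) \<longlongrightarrow> 0) (at_right 0)"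
  shows "\<exists>C\<ge>0. \<forall>a. 0 < a \<longrightarrow> a \<le> 1 \<longrightarrow> \<psi> a \<le> C * \<phi> a"
proof -
  obtain \<delta> where \<delta>: "0 < \<delta>" "\<delta> \<le> 1" "\<And>a. 0 < a \<Longrightarrow> a < \<delta> \<Longrightarrow> \<psi> a \<le> 1 * \<phi> a"
    using ratio_eventually_le[OF G\<phi> lim zero_less_one] by blast
  define C where "C = max 1 (\<psi> 1 / \<phi> (\<delta> / 2))"
  have pos: "0 < \<phi> (\<delta> / 2)" using classG_pos[OF G\<phi>] \<delta> by auto
  have "\<psi> a \<le> C * \<phi> a" if a: "0 < a" "a \<le> 1" for a
  proof (cases "a < \<delta>")
    case True
    then have "\<psi> a \<le> 1 * \<phi> a" using \<delta>(3) a by blast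
    also have "\<dots> \<le> C * \<phi> a"
      using classG_pos[OF G\<phi> a] by (intro mult_right_mono) (auto simp: C_def)
    finally show ?thesis .
  next
    case False
    have "\<psi> a \<le> \<psi> 1" using classG_mono[OF G\<psi> a(1) a(2)] by simp
    also have "\<dots> = (\<psi> 1 / \<phi> (\<delta> / 2)) * \<phi> (\<delta> / 2)" using pos by simp
    also have "\<dots> \<le> C * \<phi> a"
      using classG_mono[OF G\<phi>, of "\<delta> / 2" a] False \<delta> a pos classG_pos[OF G\<psi>, of 1]
      by (intro mult_mono) (auto simp: C_def)
    finally show ?thesis .
  qed
  then show ?thesis by (intro exI[of _ C]) (auto simp: C_def)
qed

lemma tendsto_0_if_ratio_tendsto_0:
  assumes G\<phi>: "classG \<phi>" and G\<psi>: "classG \<psi>" and lim: "((\<lambda>t. \<psi> t / \<phi> t) \<longlongrightarrow> 0) (at_right 0)"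
  shows "(\<psi> \<longlongrightarrow> 0) (at_right 0)"
proof (rule real_tendsto_sandwich[where f="\<lambda>_. 0" and h="\<lambda>t. \<psi> t / \<phi> t * \<phi> 1"])
  have ev: "\<forall>\<^sub>F t in at_right 0. 0 < t \<and> t < (1::real)"
    unfolding eventually_at_right[OF zero_less_one] by (intro exI[of _ 1]) auto
  then show "\<forall>\<^sub>F t in at_right 0. 0 \<le> \<psi> t"
    by eventually_elim (use classG_pos[OF G\<psi>] in \<open>auto intro: less_imp_le\<close>)
  show "\<forall>\<^sub>F t in at_right 0. \<psi> t \<le> \<psi> t / \<phi> t * \<phi> 1"
    using ev
  proof eventually_elim
    case (elim t)
    have "0 < \<phi> t" "0 < \<psi> t" "\<phi> t \<le> \<phi> 1"
      using classG_pos[OF G\<phi>] classG_pos[OF G\<psi>] classG_mono[OF G\<phi>] elim by auto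
    then show ?case by (simp add: field_simps)
  qed
  show "((\<lambda>t. \<psi> t / \<phi> t * \<phi> 1) \<longlongrightarrow> 0) (at_right 0)"
    using tendsto_mult[OF lim tendsto_const[of "\<phi> 1"]] by simp
qed simp

section \<open>The Lorentz norm\<close>

lemma classG_Inf:
  assumes "classG \<phi>"
  shows "0 \<le> Inf (\<phi> ` {0<..1})" and "0 < t \<Longrightarrow> t \<le> 1 \<Longrightarrow> Inf (\<phi> ` {0<..1}) \<le> \<phi> t"
proof -
  have "bdd_below (\<phi> ` {0<..1})"
    using classG_pos[OF assms] by (auto intro!: bdd_belowI[of _ 0] less_imp_le)
  then show "0 < t \<Longrightarrow> t \<le> 1 \<Longrightarrow> Inf (\<phi> ` {0<..1}) \<le> \<phi> t"
    by (intro cINF_lower) auto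
  show "0 \<le> Inf (\<phi> ` {0<..1})"
    using classG_pos[OF assms] by (intro cINF_greatest) (auto intro: less_imp_le)
qed

lemma phi_ext_mono: "classG \<phi> \<Longrightarrow> a \<le> b \<Longrightarrow> phi_ext \<phi> a \<le> phi_ext \<phi> b"
  using classG_Inf[of \<phi>] classG_mono[of \<phi>] classG_pos[of \<phi> b] classG_pos[of \<phi> 1]
  unfolding phi_ext_def by auto

lemma phi_ext_continuous_right:
  assumes G: "classG \<phi>"
  shows "continuous (at_right a) (phi_ext \<phi>)"
proof -
  consider "a < 0" | "a = 0" | "0 < a" "a < 1" | "1 \<le> a" by linarith
  then show ?thesis
  proof cases
    case 1
    have "\<forall>\<^sub>F x in at_right a. phi_ext \<phi> x = phi_ext \<phi> a"
      unfolding eventually_at_right[OF 1] using 1 by (auto simp: phi_ext_def)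
    then show ?thesis unfolding continuous_within by (rule tendsto_eventually)
  next
    case 2
    let ?I = "Inf (\<phi> ` {0<..1})"
    have "(phi_ext \<phi> \<longlongrightarrow> ?I) (at_right 0)"
    proof (rule order_tendstoI)
      fix y assume "y < ?I"
      have "y < phi_ext \<phi> x" if "0 < x" "x < 1" for x
        using classG_Inf(2)[OF G, of x] that \<open>y < ?I\<close> by (simp add: phi_ext_def)
      then show "\<forall>\<^sub>F x in at_right 0. y < phi_ext \<phi> x"
        unfolding eventually_at_right[OF zero_less_one] by (intro exI[of _ 1]) auto
    next
      fix y assume "?I < y"
      then obtain t where t: "0 < t" "t \<le> 1" "\<phi> t < y"
        using cInf_lessD[of "\<phi> ` {0<..1}" y] by auto
      have "phi_ext \<phi> x < y" if "0 < x" "x < t" for x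
        using classG_mono[OF G, of x t] that t by (simp add: phi_ext_def)
      then show "\<forall>\<^sub>F x in at_right 0. phi_ext \<phi> x < y"
        unfolding eventually_at_right[OF t(1)] using t(1) by (intro exI[of _ t]) auto
    qed
    then show ?thesis using 2 unfolding continuous_within by (simp add: phi_ext_def)
  next
    case 3
    have "isCont \<phi> a"
      using classG_continuous_on[OF G] 3 by (simp add: continuous_on_eq_continuous_at)
    moreover have "\<forall>\<^sub>F x in nhds a. phi_ext \<phi> x = \<phi> x"
      using eventually_nhds_in_open[of "{0<..<1}" a] 3
      by (auto elim!: eventually_mono simp: phi_ext_def)
    ultimately have "isCont (phi_ext \<phi>) a" using isCont_cong by blast
    then show ?thesis by (rule continuous_at_imp_continuous_within)
  next
    case 4
    have "\<forall>\<^sub>F x in at_right a. phi_ext \<phi> x = phi_ext \<phi> a"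
      using eventually_at_right_less[of a] by eventually_elim (use 4 in \<open>auto simp: phi_ext_def\<close>)
    then show ?thesis unfolding continuous_within by (rule tendsto_eventually)
  qed
qed

text \<open>\<open>phi_ext \<phi>\<close> jumps from 0 to \<open>\<phi>(0+)\<close> at 0, so this atom belongs to [0, a].\<close>
lemma phi_le_emeasure_Icc:
  assumes G: "classG \<phi>" and a: "0 < a" "a \<le> 1"
  shows "ennreal (\<phi> a) \<le> emeasure (interval_measure (phi_ext \<phi>)) {0..a}"
proof -
  let ?M = "interval_measure (phi_ext \<phi>)"
  have Ioc: "emeasure ?M {u<..v} = phi_ext \<phi> v - phi_ext \<phi> u" if "u \<le> v" for u v
    using that by (intro emeasure_interval_measure_Ioc phi_ext_mono[OF G] phi_ext_continuous_right[OF G])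
  have "{-1<..<0::real} = (\<Union>n. {-1<..-inverse (real (Suc n))})"
  proof safe
    fix x :: real assume x: "x \<in> {-1<..<0}"
    then obtain n where "inverse (real (Suc n)) < - x"
      using reals_Archimedean[of "- x"] by auto
    then show "x \<in> (\<Union>n. {-1<..-inverse (real (Suc n))})"
      using x by (intro UN_I[of n]) auto
  next
    fix x :: real and n assume "x \<in> {-1<..-inverse (real (Suc n))}"
    then have "-1 < x" "x \<le> - inverse (real (Suc n))" by auto
    moreover have "- inverse (real (Suc n)) < 0" by simp
    ultimately have "-1 < x" "x < 0" by linarith+
    then show "x \<in> {-1<..<0}" by simp
  qed
  moreover have "emeasure ?M {-1<..-inverse (real (Suc n))} = 0" for n
    by (subst Ioc) (auto simp: phi_ext_def inverse_le_1_iff)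
  then have "emeasure ?M (\<Union>n. {-1<..-inverse (real (Suc n))}) = 0"
    by (intro emeasure_UN_eq_0) auto
  ultimately have null: "emeasure ?M {-1<..<0} = 0"
    by simp
  have "ennreal (\<phi> a) = emeasure ?M {-1<..a}"
    using a by (subst Ioc) (auto simp: phi_ext_def)
  also have "\<dots> \<le> emeasure ?M ({0..a} \<union> {-1<..<0})"
    by (rule emeasure_mono) auto
  also have "\<dots> \<le> emeasure ?M {0..a} + emeasure ?M {-1<..<0}"
    by (rule emeasure_subadditive) auto
  finally show ?thesis using null by simp
qed

lemma distr01_ge_level_measure:
  assumes x: "meas01 x" and "0 \<le> \<tau>" and "\<sigma> < ennreal \<tau>"
  shows "ennreal (level_measure x \<tau>) \<le> distr01 x \<sigma>"
proof -
  have "{t\<in>{0..1}. \<tau> < \<bar>x t\<bar>} \<subseteq> {t\<in>{0..1}. \<sigma> < ennreal \<bar>x t\<bar>}"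
    using assms(2,3) by (auto simp: ennreal_less_iff intro: order.strict_trans)
  then have "emeasure lebesgue {t\<in>{0..1}. \<tau> < \<bar>x t\<bar>} \<le> distr01 x \<sigma>"
    unfolding distr01_def by (intro emeasure_mono meas01_Collect x) auto
  then show ?thesis using emeasure_level_set[OF x] by simp
qed

lemma le_rearr:
  assumes x: "meas01 x" and "0 \<le> \<tau>" and "0 < level_measure x \<tau>" and "0 \<le> s" "s \<le> level_measure x \<tau>"
  shows "ennreal \<tau> \<le> rearr x s"
proof -
  have le: "ennreal \<tau> \<le> \<sigma>" if "distr01 x \<sigma> < ennreal (level_measure x \<tau>)" for \<sigma>
    using distr01_ge_level_measure[OF x \<open>0 \<le> \<tau>\<close>, of \<sigma>] that by (meson leD le_less_linear)
  then have "ennreal \<tau> \<le> Inf {\<sigma>. distr01 x \<sigma> < ennreal (level_measure x \<tau>)}"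
    by (auto intro: Inf_greatest)
  moreover have "{\<sigma>. distr01 x \<sigma> = 0} \<subseteq> {\<sigma>. distr01 x \<sigma> < ennreal (level_measure x \<tau>)}"
    using assms(3) by auto
  moreover have "{\<sigma>. distr01 x \<sigma> < ennreal s} \<subseteq> {\<sigma>. distr01 x \<sigma> < ennreal (level_measure x \<tau>)}"
    using ennreal_leI[OF assms(5)] by (auto dest: order.strict_trans2)
  ultimately show ?thesis
    unfolding rearr_def by (auto intro: order.trans Inf_superset_mono)
qed

definition level_interval :: "(real \<Rightarrow> real) \<Rightarrow> real \<Rightarrow> real set" where
  "level_interval x \<tau> = (if 0 < level_measure x \<tau> then {0..level_measure x \<tau>} else {})"

lemma sum_level_intervals_le_rearr:
  assumes x: "meas01 x" and h: "0 < h"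
  shows "(\<Sum>k<K. ennreal h * indicator (level_interval x (real (Suc k) * h)) s)
    \<le> rearr x s * indicator {0..1} s"
proof -
  define S where "S = {k\<in>{..<K}. s \<in> level_interval x (real (Suc k) * h)}"
  have "(\<Sum>k<K. ennreal h * indicator (level_interval x (real (Suc k) * h)) s)
      = (\<Sum>k<K. if s \<in> level_interval x (real (Suc k) * h) then ennreal h else 0)"
    by (intro sum.cong) (auto simp: indicator_def)
  also have "\<dots> = (\<Sum>k\<in>S. ennreal h)"
    unfolding S_def by (rule sum.inter_filter[symmetric]) simp
  also have "\<dots> = ennreal (real (card S) * h)"
    using h by (simp add: ennreal_mult ennreal_of_nat_eq_real_of_nat)
  also have "\<dots> \<le> rearr x s * indicator {0..1} s"
  proof (cases "S = {}")
    case False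
    define J where "J = Max S"
    have "finite S" by (simp add: S_def)
    then have "J \<in> S" "S \<subseteq> {..J}" using False by (auto simp: J_def)
    then have "card S \<le> Suc J" and J: "s \<in> level_interval x (real (Suc J) * h)"
      using card_mono[of "{..J}" S] by (auto simp: S_def)
    then have pos: "0 < level_measure x (real (Suc J) * h)"
      and s: "0 \<le> s" "s \<le> level_measure x (real (Suc J) * h)"
      by (auto simp: level_interval_def split: if_splits)
    have "s \<le> 1" using s(2) level_measure_le_1[OF x] by (rule order_trans)
    have "ennreal (real (card S) * h) \<le> ennreal (real (Suc J) * h)"
      using \<open>card S \<le> Suc J\<close> h by (intro ennreal_leI mult_right_mono) auto
    also have "\<dots> \<le> rearr x s"
      using le_rearr[OF x _ pos s(1,2)] h by simp
    finally show ?thesis using s(1) \<open>s \<le> 1\<close> by simp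
  qed simp
  finally show ?thesis .
qed

lemma lorentz_norm_ge_sum:
  assumes G: "classG \<phi>" and x: "meas01 x" and h: "0 < h"
  shows "ennreal (\<Sum>k<K. h * ext0 \<phi> (level_measure x (real (Suc k) * h))) \<le> lorentz_norm \<phi> x"
proof -
  let ?M = "interval_measure (phi_ext \<phi>)"
  let ?B = "\<lambda>k. level_interval x (real (Suc k) * h)"
  have "ennreal (\<Sum>k<K. h * ext0 \<phi> (level_measure x (real (Suc k) * h)))
      = (\<Sum>k<K. ennreal (h * ext0 \<phi> (level_measure x (real (Suc k) * h))))"
    using h ext0_nonneg[OF G level_measure_le_1[OF x]] by (intro sum_ennreal[symmetric]) auto
  also have "\<dots> \<le> (\<Sum>k<K. ennreal h * emeasure ?M (?B k))"
  proof (intro sum_mono)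
    fix k
    let ?a = "level_measure x (real (Suc k) * h)"
    show "ennreal (h * ext0 \<phi> ?a) \<le> ennreal h * emeasure ?M (?B k)"
    proof (cases "0 < ?a")
      case True
      then show ?thesis
        using h phi_le_emeasure_Icc[OF G True level_measure_le_1[OF x]]
        by (simp add: ext0_def level_interval_def ennreal_mult' mult_left_mono)
    qed (simp add: ext0_def)
  qed
  also have "\<dots> = \<integral>\<^sup>+ s. (\<Sum>k<K. ennreal h * indicator (?B k) s) \<partial>?M"
    by (subst nn_integral_sum) (auto simp: level_interval_def nn_integral_cmult_indicator)
  also have "\<dots> \<le> lorentz_norm \<phi> x"
    unfolding lorentz_norm_def by (intro nn_integral_mono sum_level_intervals_le_rearr x h)
  finally show ?thesis .
qed

lemma lorentz_norm_zero: "lorentz_norm \<phi> (\<lambda>t. 0) = 0"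
proof -
  have "distr01 (\<lambda>t. 0) \<tau> = 0" for \<tau>
    by (simp add: distr01_def)
  then have "rearr (\<lambda>t. 0) s = 0" for s
    by (simp add: rearr_def bot_ennreal)
  then show ?thesis by (simp add: lorentz_norm_def)
qed

lemma lorentz_norm_pos:
  assumes G: "classG \<phi>" and x: "meas01 x" and nonzero: "\<not> (AE t in lebesgue_on {0..1}. x t = 0)"
  shows "0 < lorentz_norm \<phi> x"
proof -
  obtain \<eta> where \<eta>: "0 < \<eta>" "level_measure x \<eta> \<noteq> 0"
    using AE_zero_if_level_measures_zero[OF x] nonzero by blast
  have pos: "0 < level_measure x \<eta>"
    using \<eta>(2) level_measure_nonneg[of x \<eta>] by linarith
  have "0 < ennreal (\<eta> * ext0 \<phi> (level_measure x \<eta>))"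
    using classG_pos[OF G pos level_measure_le_1[OF x]] \<eta>(1) pos by (simp add: ext0_def)
  also have "ennreal (\<eta> * ext0 \<phi> (level_measure x \<eta>)) \<le> lorentz_norm \<phi> x"
    using lorentz_norm_ge_sum[OF G x \<eta>(1), of 1] by simp
  finally show ?thesis .
qed

section \<open>Disjoint sequences\<close>

lemma small_support_of_disjoint:
  fixes xs :: "nat \<Rightarrow> real \<Rightarrow> real"
  assumes meas: "\<And>n. meas01 (xs n)"
    and disj: "\<And>m n. m \<noteq> n \<Longrightarrow> AE t in lebesgue_on {0..1}. xs m t * xs n t = 0"
    and "0 < \<delta>"
  shows "\<exists>n. measure lebesgue {t\<in>{0..1}. xs n t \<noteq> 0} < \<delta>"
proof (rule ccontr)
  define A where "A n = {t\<in>{0..1}. xs n t \<noteq> 0}" for n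
  have A: "A n \<in> sets lebesgue" "A n \<subseteq> {0..1}" for n
    unfolding A_def using sets_support[OF meas] by auto
  assume "\<nexists>n. measure lebesgue {t\<in>{0..1}. xs n t \<noteq> 0} < \<delta>"
  then have large: "\<delta> \<le> measure lebesgue (A n)" for n
    by (auto simp: A_def not_less)
  obtain K :: nat where K: "1 < real K * \<delta>"
    using ex_less_of_nat_mult[OF \<open>0 < \<delta>\<close>] by blast
  have "pairwise (\<lambda>i j. AE t in lebesgue. t \<notin> A i \<or> t \<notin> A j) {..<K}"
  proof (intro pairwiseI)
    fix i j :: nat assume "i \<in> {..<K}" "j \<in> {..<K}" "i \<noteq> j"
    then have "AE t in lebesgue. t \<in> {0..1} \<longrightarrow> xs i t * xs j t = 0"
      using disj by (simp add: AE_restrict_space_iff)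
    then show "AE t in lebesgue. t \<notin> A i \<or> t \<notin> A j"
      by eventually_elim (auto simp: A_def)
  qed
  then have "measure lebesgue (\<Union>n<K. A n) = (\<Sum>n<K. measure lebesgue (A n))"
    using A by (intro measure_UNION_AE) (auto intro: fmeasurable_subset01)
  also have "\<dots> \<ge> real K * \<delta>"
    using sum_bounded_below[of "{..<K}" \<delta> "\<lambda>n. measure lebesgue (A n)"] large by simp
  moreover have "measure lebesgue (\<Union>n<K. A n) \<le> 1"
    using A by (intro measure_subset01_le_1) auto
  ultimately show False using K by linarith
qed

lemma mem_lorentz_closed_span:
  fixes xs :: "nat \<Rightarrow> real \<Rightarrow> real"
  assumes "xs n \<in> lorentz_space \<phi>"
  shows "xs n \<in> lorentz_closed_span \<phi> xs"
  unfolding lorentz_closed_span_def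
proof (intro CollectI conjI allI impI assms)
  fix e :: real assume "0 < e"
  have "xs n t - (\<Sum>i<Suc n. (if i = n then 1 else 0) * xs i t) = 0" for t
    by (simp add: if_distrib sum.If_cases)
  then have "lorentz_norm \<phi> (\<lambda>t. xs n t - (\<Sum>i<Suc n. (if i = n then 1 else 0) * xs i t)) = 0"
    using lorentz_norm_zero by simp
  then show "\<exists>m c. lorentz_norm \<phi> (\<lambda>t. xs n t - (\<Sum>i<m. c i * xs i t)) < ennreal e"
    using \<open>0 < e\<close> by (intro exI[of _ "Suc n"] exI[of _ "\<lambda>i. if i = n then 1 else 0"]) simp
qed

section \<open>Symmetric spaces with fundamental function \<open>\<psi>\<close>\<close>

locale symmetric_space_fund =
  fixes F :: "(real \<Rightarrow> real) set" and N :: "(real \<Rightarrow> real) \<Rightarrow> real" and \<psi> :: "real \<Rightarrow> real"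
  assumes symmetric_space: "symmetric_space F N"
    and fundamental_function: "has_fundamental_function F N \<psi>"
    and classG_\<psi>: "classG \<psi>"
begin

lemma mem_meas01: "x \<in> F \<Longrightarrow> meas01 x"
  using symmetric_space unfolding symmetric_space_def by (elim conjE) blast

lemma add_mem: "x \<in> F \<Longrightarrow> y \<in> F \<Longrightarrow> (\<lambda>t. x t + y t) \<in> F"
  using symmetric_space unfolding symmetric_space_def by (elim conjE) blast

lemma scale_mem: "x \<in> F \<Longrightarrow> (\<lambda>t. c * x t) \<in> F"
  using symmetric_space unfolding symmetric_space_def by (elim conjE) blast

lemma norm_triangle: "x \<in> F \<Longrightarrow> y \<in> F \<Longrightarrow> N (\<lambda>t. x t + y t) \<le> N x + N y"
  using symmetric_space unfolding symmetric_space_def by (elim conjE) blast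

lemma norm_scale: "x \<in> F \<Longrightarrow> N (\<lambda>t. c * x t) = \<bar>c\<bar> * N x"
  using symmetric_space unfolding symmetric_space_def by (elim conjE) blast

lemma complete:
  assumes "\<And>n. xs n \<in> F" and "\<And>e. 0 < e \<Longrightarrow> \<exists>M. \<forall>m\<ge>M. \<forall>n\<ge>M. N (\<lambda>t. xs m t - xs n t) < e"
  shows "\<exists>x\<in>F. (\<lambda>n. N (\<lambda>t. xs n t - x t)) \<longlonglongrightarrow> 0"
proof -
  have "\<forall>xs. (\<forall>n. xs n \<in> F) \<and> (\<forall>e>0. \<exists>M. \<forall>m\<ge>M. \<forall>n\<ge>M. N (\<lambda>t. xs m t - xs n t) < e)
      \<longrightarrow> (\<exists>x\<in>F. (\<lambda>n. N (\<lambda>t. xs n t - x t)) \<longlonglongrightarrow> 0)"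
    using symmetric_space unfolding symmetric_space_def by (elim conjE) assumption
  then show ?thesis using assms by blast
qed

lemma ideal:
  assumes "y \<in> F" "meas01 x" "\<And>t. t \<in> {0..1} \<Longrightarrow> \<bar>x t\<bar> \<le> \<bar>y t\<bar>"
  shows "x \<in> F \<and> N x \<le> N y"
proof -
  have "\<forall>x y. y \<in> F \<and> meas01 x \<and> (\<forall>t\<in>{0..1}. \<bar>x t\<bar> \<le> \<bar>y t\<bar>) \<longrightarrow> x \<in> F \<and> N x \<le> N y"
    using symmetric_space unfolding symmetric_space_def by (elim conjE) assumption
  then show ?thesis using assms by blast
qed

lemma rearrangement_invariant:
  assumes "y \<in> F" "meas01 x" "equimeasurable x y"
  shows "x \<in> F \<and> N x = N y"
proof -
  have "\<forall>x y. y \<in> F \<and> meas01 x \<and> equimeasurable x y \<longrightarrow> x \<in> F \<and> N x = N y"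
    using symmetric_space unfolding symmetric_space_def by (elim conjE) assumption
  then show ?thesis using assms by blast
qed

lemma zero_mem: "(\<lambda>t. 0) \<in> F"
  using symmetric_space unfolding symmetric_space_def by (elim conjE) blast

lemma norm_zero_fun: "N (\<lambda>t. 0) = 0"
  using norm_scale[OF zero_mem, of 0] by simp

lemma diff_mem: "x \<in> F \<Longrightarrow> y \<in> F \<Longrightarrow> (\<lambda>t. x t - y t) \<in> F"
  using add_mem[of x "\<lambda>t. (-1) * y t"] scale_mem[of y "-1"] by simp

lemma norm_diff_commute: "x \<in> F \<Longrightarrow> y \<in> F \<Longrightarrow> N (\<lambda>t. x t - y t) = N (\<lambda>t. y t - x t)"
  using norm_scale[OF diff_mem[of y x], of "-1"] by simp

lemma norm_scaled_indicator:
  assumes E: "E \<subseteq> {0..1}" "E \<in> sets lebesgue"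
  shows "(\<lambda>t. c * indicator E t) \<in> F \<and> N (\<lambda>t. c * indicator E t) = \<bar>c\<bar> * ext0 \<psi> (measure lebesgue E)"
proof -
  define a where "a = measure lebesgue E"
  have a: "0 \<le> a" "a \<le> 1" using measure_subset01_le_1[OF E] by (auto simp: a_def)
  let ?g = "\<lambda>t. c * indicator {0<..<a} t"
  have g: "?g \<in> F \<and> N ?g = \<bar>c\<bar> * ext0 \<psi> a"
  proof (cases "a = 0")
    case True
    then show ?thesis using zero_mem norm_zero_fun by (simp add: ext0_def)
  next
    case False
    then have "indicator {0<..<a} \<in> F" "N (indicator {0<..<a}) = \<psi> a"
      using fundamental_function a unfolding has_fundamental_function_def by auto
    then show ?thesis using scale_mem norm_scale False a by (simp add: ext0_def)
  qed
  have "emeasure lebesgue E = emeasure lebesgue {0<..<a}"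
    using a by (simp add: a_def emeasure_eq_measure2 fmeasurable_subset01 E)
  moreover have "{t\<in>{0..1}. \<tau> < \<bar>c * indicator E t\<bar>} = (if \<tau> < \<bar>c\<bar> then E else {})"
    and "{t\<in>{0..1}. \<tau> < \<bar>?g t\<bar>} = (if \<tau> < \<bar>c\<bar> then {0<..<a} else {})"
    if "0 < \<tau>" for \<tau>
    using E(1) a that by (auto simp: indicator_def)
  ultimately have "equimeasurable (\<lambda>t. c * indicator E t) ?g"
    by (simp add: equimeasurable_def)
  then show ?thesis
    using rearrangement_invariant[OF conjunct1[OF g] meas01_scaled_indicator[OF E(2)]] g
    by (simp add: a_def)
qed

lemma level_measure_le_norm:
  assumes w: "w \<in> F" and \<eta>: "0 < \<eta>"
  shows "\<eta> * ext0 \<psi> (level_measure w \<eta>) \<le> N w"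
proof -
  define E where "E = {t\<in>{0..1}. \<eta> < \<bar>w t\<bar>}"
  have E: "E \<subseteq> {0..1}" "E \<in> sets lebesgue"
    using sets_level_set[OF mem_meas01[OF w]] by (auto simp: E_def)
  have "N (\<lambda>t. \<eta> * indicator E t) \<le> N w"
    using ideal[OF w meas01_scaled_indicator[OF E(2)]] \<eta> by (auto simp: E_def indicator_def)
  then show ?thesis
    using norm_scaled_indicator[OF E, of \<eta>] \<eta> by (simp add: level_measure_def E_def)
qed

lemma sum_mem:
  assumes "finite I" "\<And>i. i \<in> I \<Longrightarrow> f i \<in> F"
  shows "(\<lambda>t. \<Sum>i\<in>I. f i t) \<in> F \<and> N (\<lambda>t. \<Sum>i\<in>I. f i t) \<le> (\<Sum>i\<in>I. N (f i))"
  using assms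
proof (induction I rule: finite_induct)
  case empty
  then show ?case using zero_mem norm_zero_fun by simp
next
  case (insert i I)
  then have fi: "f i \<in> F" and IH: "(\<lambda>t. \<Sum>i\<in>I. f i t) \<in> F" "N (\<lambda>t. \<Sum>i\<in>I. f i t) \<le> (\<Sum>i\<in>I. N (f i))"
    by auto
  have "(\<lambda>t. \<Sum>i\<in>insert i I. f i t) = (\<lambda>t. f i t + (\<Sum>i\<in>I. f i t))"
    using insert(1,2) by simp
  then show ?case
    using add_mem[OF fi IH(1)] norm_triangle[OF fi IH(1)] IH(2) insert(1,2) by simp
qed

text \<open>Layer cake: \<open>|y| \<le> h \<Sum>\<^bsub>k<K\<^esub> indicator {|y| > k h}\<close>.\<close>
lemma bounded_mem:
  assumes y: "meas01 y" and h: "0 < h" and bound: "\<And>t. t \<in> {0..1} \<Longrightarrow> \<bar>y t\<bar> \<le> real K * h"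
  shows "y \<in> F \<and> N y \<le> (\<Sum>k<K. h * ext0 \<psi> (level_measure y (real k * h)))"
proof -
  define E where "E k = {t\<in>{0..1}. real k * h < \<bar>y t\<bar>}" for k
  have E: "E k \<subseteq> {0..1}" "E k \<in> sets lebesgue" for k
    using sets_level_set[OF y] by (auto simp: E_def)
  define s where "s t = (\<Sum>k<K. h * indicator (E k) t)" for t
  have "N (\<lambda>t. h * indicator (E k) t) = h * ext0 \<psi> (level_measure y (real k * h))" for k
    using norm_scaled_indicator[OF E, of h] h by (simp add: E_def level_measure_def)
  then have s: "s \<in> F" "N s \<le> (\<Sum>k<K. h * ext0 \<psi> (level_measure y (real k * h)))"
    using sum_mem[of "{..<K}" "\<lambda>k t. h * indicator (E k) t"] norm_scaled_indicator[OF E]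
    by (simp_all add: s_def[abs_def])
  have "\<bar>y t\<bar> \<le> \<bar>s t\<bar>" if t: "t \<in> {0..1}" for t
  proof -
    define j where "j = nat \<lceil>\<bar>y t\<bar> / h\<rceil>"
    have "\<bar>y t\<bar> / h \<le> real K"
      using bound[OF t] h by (simp add: pos_divide_le_eq)
    then have "j \<le> K"
      by (simp add: j_def nat_le_iff ceiling_le_iff)
    have inE: "t \<in> E k" if "k < j" for k
    proof -
      have "real k < \<bar>y t\<bar> / h" using that unfolding j_def by linarith
      then show ?thesis using t h by (simp add: E_def field_simps)
    qed
    have "\<bar>y t\<bar> \<le> real j * h"
      using h by (simp add: j_def pos_divide_le_eq[symmetric])
    also have "\<dots> = (\<Sum>k<j. h * indicator (E k) t)"
      using inE by simp
    also have "\<dots> \<le> s t"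
      unfolding s_def using \<open>j \<le> K\<close> h by (intro sum_mono2) auto
    finally show ?thesis by simp
  qed
  then show ?thesis using ideal[OF s(1) y] s(2) by force
qed

lemma level_measure_tendsto_0_if_norm_tendsto_0:
  assumes w: "\<And>n. w n \<in> F" and lim: "(\<lambda>n. N (w n)) \<longlonglongrightarrow> 0" and \<eta>: "0 < \<eta>"
  shows "(\<lambda>n. level_measure (w n) \<eta>) \<longlonglongrightarrow> 0"
proof (rule tendsto_0_if_ext0_tendsto_0[OF classG_\<psi>])
  show "(\<lambda>n. ext0 \<psi> (level_measure (w n) \<eta>)) \<longlonglongrightarrow> 0"
  proof (rule real_tendsto_sandwich[where f="\<lambda>_. 0" and h="\<lambda>n. N (w n) / \<eta>"])
    show "\<forall>\<^sub>F n in sequentially. 0 \<le> ext0 \<psi> (level_measure (w n) \<eta>)"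
      using ext0_nonneg[OF classG_\<psi> level_measure_le_1[OF mem_meas01[OF w]]] by simp
    show "\<forall>\<^sub>F n in sequentially. ext0 \<psi> (level_measure (w n) \<eta>) \<le> N (w n) / \<eta>"
      using level_measure_le_norm[OF w \<eta>] \<eta> by (simp add: pos_le_divide_eq mult.commute)
    show "(\<lambda>n. N (w n) / \<eta>) \<longlonglongrightarrow> 0"
      using tendsto_divide_zero[OF lim] .
  qed simp
qed (auto intro: level_measure_nonneg level_measure_le_1 mem_meas01 w)

lemma AE_abs_eq_limit_of_truncations:
  assumes x: "meas01 x" and trunc: "\<And>n. truncation n x \<in> F" and z: "z \<in> F"
    and lim: "(\<lambda>n. N (\<lambda>t. truncation n x t - z t)) \<longlonglongrightarrow> 0"
  shows "AE t in lebesgue_on {0..1}. \<bar>x t\<bar> = z t"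
proof -
  have abs_x: "meas01 (\<lambda>t. \<bar>x t\<bar>)"
    using meas01_compose[OF x, of abs] by simp
  have w: "meas01 (\<lambda>t. \<bar>x t\<bar> - z t)"
    by (intro meas01_diff abs_x mem_meas01 z)
  have null: "level_measure (\<lambda>t. \<bar>x t\<bar> - z t) (\<eta> + \<eta>) = 0" if "0 < \<eta>" for \<eta>
  proof -
    have "level_measure (\<lambda>t. \<bar>x t\<bar> - z t) (\<eta> + \<eta>)
        \<le> level_measure x (real n) + level_measure (\<lambda>t. truncation n x t - z t) \<eta>" for n
    proof -
      have tr: "meas01 (truncation n x)" by (rule meas01_truncation[OF x])
      have "level_measure (\<lambda>t. (\<bar>x t\<bar> - truncation n x t) + (truncation n x t - z t)) (\<eta> + \<eta>)
          \<le> level_measure (\<lambda>t. \<bar>x t\<bar> - truncation n x t) \<eta> + level_measure (\<lambda>t. truncation n x t - z t) \<eta>"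
        by (intro level_measure_add_le meas01_diff abs_x tr mem_meas01 z)
      moreover have "level_measure (\<lambda>t. \<bar>x t\<bar> - truncation n x t) \<eta> \<le> level_measure x (real n)"
        using \<open>0 < \<eta>\<close> by (intro level_measure_mono meas01_diff abs_x tr x) (auto simp: truncation_def)
      ultimately show ?thesis by simp
    qed
    moreover have "(\<lambda>n. level_measure x (real n) + level_measure (\<lambda>t. truncation n x t - z t) \<eta>) \<longlonglongrightarrow> 0 + 0"
      by (intro tendsto_add level_measure_tendsto_0 x level_measure_tendsto_0_if_norm_tendsto_0
          diff_mem trunc z lim \<open>0 < \<eta>\<close>)
    ultimately have "level_measure (\<lambda>t. \<bar>x t\<bar> - z t) (\<eta> + \<eta>) \<le> 0"
      by (intro tendsto_le[OF trivial_limit_sequentially _ tendsto_const]) auto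
    then show ?thesis using level_measure_nonneg by (rule antisym)
  qed
  have "level_measure (\<lambda>t. \<bar>x t\<bar> - z t) \<eta> = 0" if "0 < \<eta>" for \<eta>
    using null[of "\<eta> / 2"] that by simp
  then have "AE t in lebesgue_on {0..1}. \<bar>x t\<bar> - z t = 0"
    by (rule AE_zero_if_level_measures_zero[OF w])
  then show ?thesis by eventually_elim simp
qed

lemma mem_if_truncations_Cauchy:
  assumes x: "meas01 x" and trunc: "\<And>n. truncation n x \<in> F" and bound: "\<And>n. N (truncation n x) \<le> B"
    and Cauchy: "\<And>e. 0 < e \<Longrightarrow> \<exists>M. \<forall>m\<ge>M. \<forall>n\<ge>M. N (\<lambda>t. truncation m x t - truncation n x t) < e"
  shows "x \<in> F \<and> N x \<le> B"
proof -
  obtain z where z: "z \<in> F" and lim: "(\<lambda>n. N (\<lambda>t. truncation n x t - z t)) \<longlonglongrightarrow> 0"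
    using complete[OF trunc Cauchy] by blast
  have abs_x: "meas01 (\<lambda>t. \<bar>x t\<bar>)"
    using meas01_compose[OF x, of abs] by simp
  have "AE t in lebesgue_on {0..1}. \<bar>\<bar>x t\<bar>\<bar> = \<bar>z t\<bar>"
    using AE_abs_eq_limit_of_truncations[OF x trunc z lim] by eventually_elim auto
  then have "(\<lambda>t. \<bar>x t\<bar>) \<in> F \<and> N (\<lambda>t. \<bar>x t\<bar>) = N z"
    by (intro rearrangement_invariant z abs_x equimeasurable_if_AE_abs_eq mem_meas01)
  then have x_mem: "x \<in> F \<and> N x \<le> N z"
    using ideal[of "\<lambda>t. \<bar>x t\<bar>" x] x by auto
  have "N z \<le> B + N (\<lambda>t. truncation n x t - z t)" for n
  proof -
    have "N z = N (\<lambda>t. truncation n x t + (z t - truncation n x t))"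
      by simp
    also have "\<dots> \<le> N (truncation n x) + N (\<lambda>t. z t - truncation n x t)"
      by (intro norm_triangle trunc diff_mem z)
    also have "\<dots> \<le> B + N (\<lambda>t. truncation n x t - z t)"
      using bound[of n] norm_diff_commute[OF z trunc] by simp
    finally show ?thesis .
  qed
  moreover have "(\<lambda>n. B + N (\<lambda>t. truncation n x t - z t)) \<longlonglongrightarrow> B + 0"
    by (intro tendsto_add tendsto_const lim)
  ultimately have "N z \<le> B"
    by (intro tendsto_le[OF trivial_limit_sequentially _ tendsto_const]) auto
  then show ?thesis using x_mem by simp
qed

context
  fixes \<phi> x :: "real \<Rightarrow> real" and D S :: real
  assumes classG_\<phi>: "classG \<phi>" and \<psi>_tendsto_0: "(\<psi> \<longlongrightarrow> 0) (at_right 0)"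
    and x: "meas01 x" and lorentz_norm_x: "lorentz_norm \<phi> x = ennreal S" and S: "0 \<le> S"
    and D: "0 \<le> D"
    and dominated: "\<And>\<tau>. 0 < \<tau> \<Longrightarrow> ext0 \<psi> (level_measure x \<tau>) \<le> D * ext0 \<phi> (level_measure x \<tau>)"
begin

lemma level_sum_le_lorentz_norm:
  "0 < h \<Longrightarrow> (\<Sum>k<K. h * ext0 \<phi> (level_measure x (real (Suc k) * h))) \<le> S"
  using lorentz_norm_ge_sum[OF classG_\<phi> x, of h K] lorentz_norm_x S by (simp add: ennreal_le_iff)

text \<open>The first layer is charged to \<open>\<psi>\<close>, all others to \<open>\<phi>\<close> via domination.\<close>
lemma norm_le_shifted_levels:
  assumes d: "meas01 d" and h: "0 < h" and a: "0 \<le> a"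
    and bound: "\<And>t. t \<in> {0..1} \<Longrightarrow> \<bar>d t\<bar> \<le> real K * h"
    and levels: "\<And>k. level_measure d (real k * h) \<le> level_measure x (a + real k * h)"
  shows "d \<in> F \<and> N d \<le> h * ext0 \<psi> (level_measure x a)
    + D * (\<Sum>k<K. h * ext0 \<phi> (level_measure x (a + real (Suc k) * h)))"
proof -
  let ?\<mu> = "\<lambda>k. level_measure d (real k * h)"
  have mem: "d \<in> F"
    using bounded_mem[OF d h bound] by auto
  have "N d \<le> (\<Sum>k<K. h * ext0 \<psi> (?\<mu> k))"
    using bounded_mem[OF d h bound] by auto
  also have "\<dots> \<le> (\<Sum>k<Suc K. h * ext0 \<psi> (?\<mu> k))"
    using h ext0_nonneg[OF classG_\<psi> level_measure_le_1[OF d]] by (intro sum_mono2) auto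
  also have "\<dots> = h * ext0 \<psi> (?\<mu> 0) + (\<Sum>k<K. h * ext0 \<psi> (?\<mu> (Suc k)))"
    by (subst sum.lessThan_Suc_shift) simp
  also have "\<dots> \<le> h * ext0 \<psi> (level_measure x a)
      + (\<Sum>k<K. h * (D * ext0 \<phi> (level_measure x (a + real (Suc k) * h))))"
  proof (intro add_mono sum_mono mult_left_mono)
    show "ext0 \<psi> (?\<mu> 0) \<le> ext0 \<psi> (level_measure x a)"
      using levels[of 0] by (intro ext0_mono classG_\<psi> level_measure_le_1 x) simp
    fix k
    have "ext0 \<psi> (?\<mu> (Suc k)) \<le> ext0 \<psi> (level_measure x (a + real (Suc k) * h))"
      using levels[of "Suc k"] by (intro ext0_mono classG_\<psi> level_measure_le_1 x)
    also have "\<dots> \<le> D * ext0 \<phi> (level_measure x (a + real (Suc k) * h))"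
      using a h by (intro dominated) (simp add: add_nonneg_pos)
    finally show "ext0 \<psi> (?\<mu> (Suc k)) \<le> D * ext0 \<phi> (level_measure x (a + real (Suc k) * h))" .
  qed (use h in auto)
  also have "\<dots> = h * ext0 \<psi> (level_measure x a)
      + D * (\<Sum>k<K. h * ext0 \<phi> (level_measure x (a + real (Suc k) * h)))"
    by (simp add: sum_distrib_left algebra_simps)
  finally show ?thesis using mem by simp
qed

lemma truncation_mem_norm_le: "truncation n x \<in> F \<and> N (truncation n x) \<le> D * S"
proof -
  have y: "meas01 (truncation n x)" by (rule meas01_truncation[OF x])
  have levels: "level_measure (truncation n x) \<tau> \<le> level_measure x (0 + \<tau>)" for \<tau>
    by (intro level_measure_mono y x) (auto simp: truncation_def)
  have bound: "\<bar>truncation n x t\<bar> \<le> real K * h" if "real n \<le> real K * h" for t K h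
    using that by (simp add: truncation_def)
  have "truncation n x \<in> F \<and> N (truncation n x) \<le> D * S + e" if "0 < e" for e
  proof -
    have \<psi>1: "0 < \<psi> 1" using classG_pos[OF classG_\<psi>] by simp
    define h where "h = e / \<psi> 1"
    have h: "0 < h" "h * \<psi> 1 = e" using \<open>0 < e\<close> \<psi>1 by (auto simp: h_def)
    obtain K :: nat where "real n / h \<le> real K" using real_arch_simple by blast
    then have "real n \<le> real K * h" using h by (simp add: field_simps)
    then have "truncation n x \<in> F \<and> N (truncation n x) \<le> h * ext0 \<psi> (level_measure x 0)
        + D * (\<Sum>k<K. h * ext0 \<phi> (level_measure x (0 + real (Suc k) * h)))"
      using bound by (intro norm_le_shifted_levels y h(1) levels) auto
    moreover have "h * ext0 \<psi> (level_measure x 0) \<le> e"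
      using mult_left_mono[OF ext0_le[OF classG_\<psi> level_measure_le_1[OF x]], of h] h by simp
    moreover have "D * (\<Sum>k<K. h * ext0 \<phi> (level_measure x (0 + real (Suc k) * h))) \<le> D * S"
      using level_sum_le_lorentz_norm[OF h(1), of K] D by (simp add: mult_left_mono)
    ultimately show ?thesis by linarith
  qed
  then show ?thesis
    using field_le_epsilon[of "N (truncation n x)" "D * S"] zero_less_one by blast
qed

lemma summable_levels: "summable (\<lambda>k. ext0 \<phi> (level_measure x (real (Suc k))))"
proof (rule summableI_nonneg_bounded)
  show "0 \<le> ext0 \<phi> (level_measure x (real (Suc k)))" for k
    by (intro ext0_nonneg classG_\<phi> level_measure_le_1 x)
  show "(\<Sum>k<K. ext0 \<phi> (level_measure x (real (Suc k)))) \<le> S" for K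
    using level_sum_le_lorentz_norm[OF zero_less_one, of K] by simp
qed

lemma truncation_diff_norm_le:
  assumes "n \<le> m"
  shows "N (\<lambda>t. truncation m x t - truncation n x t)
    \<le> ext0 \<psi> (level_measure x (real n)) + D * (\<Sum>k. ext0 \<phi> (level_measure x (real (Suc (k + n)))))"
proof -
  let ?d = "\<lambda>t. truncation m x t - truncation n x t"
  have d: "meas01 ?d" by (intro meas01_diff meas01_truncation x)
  have "?d \<in> F \<and> N ?d \<le> 1 * ext0 \<psi> (level_measure x (real n))
      + D * (\<Sum>k<m - n. 1 * ext0 \<phi> (level_measure x (real n + real (Suc k) * 1)))"
  proof (rule norm_le_shifted_levels[OF d zero_less_one])
    show "\<bar>?d t\<bar> \<le> real (m - n) * 1" for t
      using assms by (auto simp: truncation_def of_nat_diff)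
    show "level_measure ?d (real k * 1) \<le> level_measure x (real n + real k * 1)" for k
      using assms by (intro level_measure_mono d x) (auto simp: truncation_def)
  qed simp
  then have "N ?d \<le> ext0 \<psi> (level_measure x (real n))
      + D * (\<Sum>k<m - n. ext0 \<phi> (level_measure x (real (Suc (k + n)))))"
    by (simp add: add_ac)
  also have "\<dots> \<le> ext0 \<psi> (level_measure x (real n))
      + D * (\<Sum>k. ext0 \<phi> (level_measure x (real (Suc (k + n)))))"
    using summable_ignore_initial_segment[OF summable_levels, of n]
      ext0_nonneg[OF classG_\<phi> level_measure_le_1[OF x]] D
    by (intro add_left_mono mult_left_mono sum_le_suminf) auto
  finally show ?thesis .
qed

lemma truncations_Cauchy:
  assumes "0 < e"
  shows "\<exists>M. \<forall>m\<ge>M. \<forall>n\<ge>M. N (\<lambda>t. truncation m x t - truncation n x t) < e"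
proof -
  let ?b = "\<lambda>n. ext0 \<psi> (level_measure x (real n)) + D * (\<Sum>k. ext0 \<phi> (level_measure x (real (Suc (k + n)))))"
  have "(\<lambda>n. ext0 \<psi> (level_measure x (real n))) \<longlonglongrightarrow> ext0 \<psi> 0"
    by (intro isCont_tendsto_compose[OF isCont_ext0_0] \<psi>_tendsto_0 level_measure_tendsto_0 x)
  moreover have "(\<lambda>n. \<Sum>k. ext0 \<phi> (level_measure x (real (Suc (k + n))))) \<longlonglongrightarrow> 0"
    using suminf_exist_split2[OF summable_levels] by simp
  ultimately have "?b \<longlonglongrightarrow> 0 + D * 0"
    by (intro tendsto_intros) (simp add: ext0_def)
  then obtain M where M: "\<And>n. M \<le> n \<Longrightarrow> ?b n < e"
    using order_tendstoD(2)[of ?b 0 sequentially e] \<open>0 < e\<close> by (auto simp: eventually_sequentially)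
  have "N (\<lambda>t. truncation m x t - truncation n x t) < e" if "M \<le> m" "M \<le> n" for m n
  proof (cases "n \<le> m")
    case True
    then show ?thesis using truncation_diff_norm_le[OF True] M[OF that(2)] by linarith
  next
    case False
    then have "N (\<lambda>t. truncation n x t - truncation m x t) < e"
      using truncation_diff_norm_le[of m n] M[OF that(1)] by linarith
    moreover have "truncation k x \<in> F" for k
      using truncation_mem_norm_le by blast
    ultimately show ?thesis using norm_diff_commute[of "truncation m x" "truncation n x"] by simp
  qed
  then show ?thesis by blast
qed

lemma lorentz_embedding: "x \<in> F \<and> N x \<le> D * S"
  using mem_if_truncations_Cauchy[OF x _ _ truncations_Cauchy] truncation_mem_norm_le by blast

end

lemma lorentz_space_mem_norm_le:
  assumes G: "classG \<phi>" and \<psi>0: "(\<psi> \<longlongrightarrow> 0) (at_right 0)" and x: "x \<in> lorentz_space \<phi>" and D: "0 \<le> D"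
    and le: "\<And>a. 0 < a \<Longrightarrow> a \<le> measure lebesgue {t\<in>{0..1}. x t \<noteq> 0} \<Longrightarrow> \<psi> a \<le> D * \<phi> a"
  shows "x \<in> F \<and> ennreal (N x) \<le> ennreal D * lorentz_norm \<phi> x"
proof -
  have x_meas: "meas01 x" and fin: "lorentz_norm \<phi> x < \<infinity>"
    using x by (auto simp: lorentz_space_def)
  define S where "S = enn2real (lorentz_norm \<phi> x)"
  have S: "lorentz_norm \<phi> x = ennreal S" "0 \<le> S"
    using fin by (auto simp: S_def ennreal_enn2real)
  have "ext0 \<psi> (level_measure x \<tau>) \<le> D * ext0 \<phi> (level_measure x \<tau>)" if "0 < \<tau>" for \<tau>
  proof -
    have "level_measure x \<tau> \<le> measure lebesgue {t\<in>{0..1}. x t \<noteq> 0}"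
      using that by (intro level_measure_le_measure x_meas sets_support) auto
    then show ?thesis using le[of "level_measure x \<tau>"] by (simp add: ext0_def)
  qed
  then have "x \<in> F \<and> N x \<le> D * S"
    by (rule lorentz_embedding[OF G \<psi>0 x_meas S D])
  moreover have "ennreal (D * S) = ennreal D * lorentz_norm \<phi> x"
    using S D by (simp add: ennreal_mult)
  ultimately show ?thesis
    by (metis ennreal_leI)
qed

lemma lorentz_space_embedding:
  assumes G\<phi>: "classG \<phi>" and lim: "((\<lambda>t. \<psi> t / \<phi> t) \<longlongrightarrow> 0) (at_right 0)"
  shows "\<exists>C. \<forall>x\<in>lorentz_space \<phi>. x \<in> F \<and> ennreal (N x) \<le> ennreal C * lorentz_norm \<phi> x"
proof -
  obtain C where C: "0 \<le> C" "\<And>a. 0 < a \<Longrightarrow> a \<le> 1 \<Longrightarrow> \<psi> a \<le> C * \<phi> a"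
    using ratio_bounded[OF G\<phi> classG_\<psi> lim] by blast
  have "x \<in> F \<and> ennreal (N x) \<le> ennreal C * lorentz_norm \<phi> x" if x: "x \<in> lorentz_space \<phi>" for x
  proof (rule lorentz_space_mem_norm_le[OF G\<phi> _ x C(1)])
    show "(\<psi> \<longlongrightarrow> 0) (at_right 0)" by (rule tendsto_0_if_ratio_tendsto_0[OF G\<phi> classG_\<psi> lim])
    have "measure lebesgue {t\<in>{0..1}. x t \<noteq> 0} \<le> 1"
      using x by (intro measure_subset01_le_1 sets_support) (auto simp: lorentz_space_def)
    then show "\<psi> a \<le> C * \<phi> a" if "0 < a" "a \<le> measure lebesgue {t\<in>{0..1}. x t \<noteq> 0}" for a
      using that by (intro C(2)) auto
  qed
  then show ?thesis by blast
qed

text \<open>A disjoint sequence contains elements of arbitrarily small support, and on those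
  the \<open>F\<close>-norm is at most any prescribed fraction of the Lorentz norm.\<close>
lemma not_disjointly_isomorphic:
  fixes xs :: "nat \<Rightarrow> real \<Rightarrow> real"
  assumes G\<phi>: "classG \<phi>" and lim: "((\<lambda>t. \<psi> t / \<phi> t) \<longlongrightarrow> 0) (at_right 0)"
    and xs: "\<And>n. xs n \<in> lorentz_space \<phi>"
    and nonzero: "\<And>n. \<not> (AE t in lebesgue_on {0..1}. xs n t = 0)"
    and disj: "\<And>m n. m \<noteq> n \<Longrightarrow> AE t in lebesgue_on {0..1}. xs m t * xs n t = 0"
    and "0 < c"
  shows "\<exists>z\<in>lorentz_closed_span \<phi> xs. ennreal (N z) < ennreal c * lorentz_norm \<phi> z"
proof -
  obtain \<delta> where \<delta>: "0 < \<delta>" "\<And>a. 0 < a \<Longrightarrow> a < \<delta> \<Longrightarrow> \<psi> a \<le> c / 2 * \<phi> a"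
    using ratio_eventually_le[OF G\<phi> lim, of "c / 2"] \<open>0 < c\<close> by (meson half_gt_zero)
  have meas: "meas01 (xs n)" for n
    using xs by (simp add: lorentz_space_def)
  obtain n where n: "measure lebesgue {t\<in>{0..1}. xs n t \<noteq> 0} < \<delta>"
    using small_support_of_disjoint[of xs, OF meas disj \<delta>(1)] by blast
  have le: "\<psi> a \<le> c / 2 * \<phi> a"
    if "0 < a" "a \<le> measure lebesgue {t\<in>{0..1}. xs n t \<noteq> 0}" for a
    using n that by (intro \<delta>(2)) auto
  have "ennreal (N (xs n)) \<le> ennreal (c / 2) * lorentz_norm \<phi> (xs n)"
    using lorentz_space_mem_norm_le[OF G\<phi> tendsto_0_if_ratio_tendsto_0[OF G\<phi> classG_\<psi> lim] xs _ le]
      \<open>0 < c\<close> by simp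
  also have "\<dots> < ennreal c * lorentz_norm \<phi> (xs n)"
    using \<open>0 < c\<close> lorentz_norm_pos[OF G\<phi> meas nonzero] xs[of n]
    by (intro ennreal_mult_strict_right_mono ennreal_lessI) (auto simp: lorentz_space_def)
  finally show ?thesis
    using mem_lorentz_closed_span[of xs n, OF xs] by blast
qed

end

theorem theorem1:
  fixes \<phi> \<psi> :: "real \<Rightarrow> real"
    and F :: "(real \<Rightarrow> real) set" and N :: "(real \<Rightarrow> real) \<Rightarrow> real"
  assumes "classG \<phi>" and "classG \<psi>"
    and "((\<lambda>t. \<psi> t / \<phi> t) \<longlongrightarrow> 0) (at_right 0)"
    and "symmetric_space F N"
    and "has_fundamental_function F N \<psi>"
  shows "lorentz_space \<phi> \<subseteq> F \<and> inclusion_DSS \<phi> F N"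
proof -
  interpret symmetric_space_fund F N \<psi>
    using assms(4,5,2) by unfold_locales
  obtain C where "\<forall>x\<in>lorentz_space \<phi>. x \<in> F \<and> ennreal (N x) \<le> ennreal C * lorentz_norm \<phi> x"
    using lorentz_space_embedding[OF assms(1,3)] by blast
  moreover have "\<not> (\<forall>z\<in>lorentz_closed_span \<phi> xs. ennreal c * lorentz_norm \<phi> z \<le> ennreal (N z))"
    if "\<forall>n. xs n \<in> lorentz_space \<phi>" "\<forall>n. \<not> (AE t in lebesgue_on {0..1}. xs n t = 0)"
      "\<forall>m n. m \<noteq> n \<longrightarrow> (AE t in lebesgue_on {0..1}. xs m t * xs n t = 0)" "0 < c" for xs c
    using not_disjointly_isomorphic[OF assms(1,3)] that by (meson not_le)
  ultimately show ?thesis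
    unfolding inclusion_DSS_def by blast
qed

end
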